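(* Let $\kappa$ be a cardinal, $\mathbb{F}$ a field, and $V$ the vector space over $\mathbb{F}$ presented by generators $x_\alpha,y_\alpha,z_\alpha$ ($\alpha\in\kappa$) and relations $x_\alpha+y_\alpha+z_\alpha=0$. Let $F\colon\mathcal{P}(\kappa)^3\to\mathrm{Sub}(V)$, $F(A,B,C)=\mathrm{Span}\{x_\alpha:\alpha\in A\}+\mathrm{Span}\{y_\beta:\beta\in B\}+\mathrm{Span}\{z_\gamma:\gamma\in C\}$, and $G\colon\mathrm{Sub}(V)\to\mathcal{P}(\kappa)^3$, $G(W)=(\{\alpha:x_\alpha\in W\},\{\beta:y_\beta\in W\},\{\gamma:z_\gamma\in W\})$. Then for all $(A,B,C)\in\mathcal{P}(\kappa)^3$, $G(F(A,B,C))=(A\cup(B\cap C),\ B\cup(A\cap C),\ C\cup(A\cap B))$.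
   Context: $\mathcal{P}(\kappa)$ is the power set of $\kappa$; $\mathrm{Sub}(V)$ is the lattice of subspaces of $V$. *)

theory Defs
  imports Main HOL.Modules "HOL-Library.Function_Algebras"
begin

(* Free vector space over a field 'a on generators x_alpha, y_alpha, z_alpha,
   alpha ranging over the index type 'i (playing the role of the cardinal kappa). *)

datatype gen = GX | GY | GZ

definition fscale :: "'a::field \<Rightarrow> ('b \<Rightarrow> 'a) \<Rightarrow> ('b \<Rightarrow> 'a)" where
  "fscale c f = (\<lambda>p. c * f p)"

definition egen :: "'i \<Rightarrow> gen \<Rightarrow> ('i \<times> gen \<Rightarrow> 'a::field)" where
  "egen \<alpha> g = (\<lambda>p. if p = (\<alpha>, g) then 1 else 0)"

abbreviation fspan :: "('b \<Rightarrow> 'a::field) set \<Rightarrow> ('b \<Rightarrow> 'a) set" where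
  "fspan S \<equiv> module.span fscale S"

definition rels :: "('i \<times> gen \<Rightarrow> 'a::field) set" where
  "rels = range (\<lambda>\<alpha>. egen \<alpha> GX + egen \<alpha> GY + egen \<alpha> GZ)"

(* V = Free / span(rels).  Subspaces of V correspond (via the quotient map q)
   to subspaces of Free containing span(rels); we represent a subspace W of V
   by its preimage q^{-1}(W).  Then:
   - the preimage of F(A,B,C) = Span{x_a : a in A} + Span{y_b} + Span{z_c}
     is the span of those generators together with the relations;
   - x_alpha \<in> W  iff  egen alpha GX \<in> q^{-1}(W). *)
definition Fmap :: "'i set \<Rightarrow> 'i set \<Rightarrow> 'i set \<Rightarrow> ('i \<times> gen \<Rightarrow> 'a::field) set" where
  "Fmap A B C = fspan ((\<lambda>\<alpha>. egen \<alpha> GX) ` A \<union> (\<lambda>\<beta>. egen \<beta> GY) ` B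
                      \<union> (\<lambda>\<gamma>. egen \<gamma> GZ) ` C \<union> rels)"

definition Gmap :: "('i \<times> gen \<Rightarrow> 'a::field) set \<Rightarrow> 'i set \<times> 'i set \<times> 'i set" where
  "Gmap W = ({\<alpha>. egen \<alpha> GX \<in> W}, {\<beta>. egen \<beta> GY \<in> W}, {\<gamma>. egen \<gamma> GZ \<in> W})"

end

theory Submission
  imports Defs
begin

(* Let S be the spanning set of Fmap A B C.  If a is in A then x_a is in S; if a
   is in B and C then x_a = (x_a + y_a + z_a) - y_a - z_a.  Conversely, if a is in
   neither A nor B, the only elements of S with a nonzero entry in row a are z_a
   and the relation x_a + y_a + z_a, so every element of S, hence of span S,
   has equal entries at (a, GX) and (a, GY); x_a does not.  The cases of y_a and
   z_a are the same argument with the generators permuted. *)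

interpretation fmod: module "fscale :: 'a::field \<Rightarrow> ('b \<Rightarrow> 'a) \<Rightarrow> 'b \<Rightarrow> 'a"
  by unfold_locales (auto simp: fscale_def fun_eq_iff algebra_simps)

lemma subspace_coord_eq: "fmod.subspace {f :: 'b \<Rightarrow> 'a::field. f p = f q}"
  unfolding fmod.subspace_def by (auto simp: fscale_def)

lemma span_coord_eq:
  fixes S :: "('b \<Rightarrow> 'a::field) set"
  assumes "\<forall>f\<in>S. f p = f q" and "f \<in> fspan S"
  shows "f p = f q"
proof -
  have "fspan S \<subseteq> {f. f p = f q}"
    using assms(1) by (intro fmod.span_minimal subspace_coord_eq) auto
  with assms(2) show ?thesis by blast
qed

lemma egen_apply: "egen \<alpha> g p = (if p = (\<alpha>, g) then 1 else 0)"
  by (simp add: egen_def)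

lemma egen_notin_span:
  fixes S :: "('i \<times> gen \<Rightarrow> 'a::field) set"
  assumes "g \<noteq> h" and "\<forall>f\<in>S. f (a, g) = f (a, h)"
  shows "egen a g \<notin> fspan S"
proof
  assume "egen a g \<in> fspan S"
  then have "egen a g (a, g) = (egen a g (a, h) :: 'a)"
    by (rule span_coord_eq[OF assms(2)])
  with assms(1) show False by (simp add: egen_apply)
qed

lemma egen_sum_eq_row_indicator:
  assumes "distinct [g, h, k]"
  shows "egen \<alpha> g + egen \<alpha> h + egen \<alpha> k = (\<lambda>p :: 'i \<times> gen. if fst p = \<alpha> then 1 else 0 :: 'a::field)"
proof
  fix p :: "'i \<times> gen"
  show "(egen \<alpha> g + egen \<alpha> h + egen \<alpha> k) p = (if fst p = \<alpha> then 1 else 0 :: 'a)"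
    using assms by (cases p; cases "snd p"; cases g; cases h; cases k) (auto simp: egen_def)
qed

lemma rels_row_indicators:
  "rels = range (\<lambda>\<alpha> (p :: 'i \<times> gen). if fst p = \<alpha> then 1 else 0 :: 'a::field)"
proof -
  have "distinct [GX, GY, GZ]" by simp
  then show ?thesis by (simp add: rels_def egen_sum_eq_row_indicator)
qed

lemma coords_agree_on_generators:
  assumes "distinct [g, h, k]" and "a \<notin> P" and "a \<notin> Q"
  shows "\<forall>f \<in> (\<lambda>\<alpha>. egen \<alpha> g) ` P \<union> (\<lambda>\<alpha>. egen \<alpha> h) ` Q \<union> (\<lambda>\<alpha>. egen \<alpha> k) ` R \<union> rels.
           f (a, g) = (f (a, h) :: 'a::field)"
  using assms by (auto simp: rels_row_indicators egen_apply)

lemma egen_in_span_iff: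
  fixes P Q R :: "'i set"
  assumes gens: "distinct [g, h, k]"
  defines "S \<equiv> (\<lambda>\<alpha>. egen \<alpha> g) ` P \<union> (\<lambda>\<alpha>. egen \<alpha> h) ` Q \<union> (\<lambda>\<alpha>. egen \<alpha> k) ` R
                 \<union> (rels :: ('i \<times> gen \<Rightarrow> 'a::field) set)"
  shows "egen a g \<in> fspan S \<longleftrightarrow> a \<in> P \<union> (Q \<inter> R)"
proof
  assume "a \<in> P \<union> (Q \<inter> R)"
  then show "egen a g \<in> fspan S"
  proof
    assume "a \<in> P"
    then show ?thesis by (intro fmod.span_base) (simp add: S_def)
  next
    assume "a \<in> Q \<inter> R"
    then have "egen a h \<in> fspan S" "egen a k \<in> fspan S"
      by (auto intro: fmod.span_base simp: S_def)
    moreover have "egen a g + egen a h + egen a k \<in> fspan S"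
      by (intro fmod.span_base) (simp add: S_def rels_row_indicators egen_sum_eq_row_indicator[OF gens])
    ultimately have "(egen a g + egen a h + egen a k) - egen a h - egen a k \<in> fspan S"
      by (intro fmod.span_diff)
    then show ?thesis by simp
  qed
next
  assume g_in: "egen a g \<in> fspan S"
  show "a \<in> P \<union> (Q \<inter> R)"
  proof (rule ccontr)
    assume "a \<notin> P \<union> (Q \<inter> R)"
    then consider "a \<notin> P" "a \<notin> Q" | "a \<notin> P" "a \<notin> R" by blast
    then show False
    proof cases
      case 1
      with gens have "\<forall>f\<in>S. f (a, g) = f (a, h)"
        unfolding S_def by (rule coords_agree_on_generators)
      with gens have "egen a g \<notin> fspan S" by (intro egen_notin_span) auto
      with g_in show False by contradiction
    next
      case 2
      from gens have "distinct [g, k, h]" by auto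
      with 2 have "\<forall>f\<in>S. f (a, g) = f (a, k)"
        unfolding S_def using coords_agree_on_generators[of g k h a P R Q] by (simp add: Un_ac)
      with gens have "egen a g \<notin> fspan S" by (intro egen_notin_span) auto
      with g_in show False by contradiction
    qed
  qed
qed

theorem lemma6p2:
  fixes A B C :: "'i set"
  shows "Gmap (Fmap A B C :: ('i \<times> gen \<Rightarrow> 'a::field) set)
           = (A \<union> (B \<inter> C), B \<union> (A \<inter> C), C \<union> (A \<inter> B))"
proof -
  let ?F = "Fmap A B C :: ('i \<times> gen \<Rightarrow> 'a) set"
  have "egen a GX \<in> ?F \<longleftrightarrow> a \<in> A \<union> (B \<inter> C)" for a
    using egen_in_span_iff[of GX GY GZ a A B C] by (simp add: Fmap_def)
  moreover have "egen a GY \<in> ?F \<longleftrightarrow> a \<in> B \<union> (A \<inter> C)" for a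
    using egen_in_span_iff[of GY GX GZ a B A C] by (simp add: Fmap_def Un_ac)
  moreover have "egen a GZ \<in> ?F \<longleftrightarrow> a \<in> C \<union> (A \<inter> B)" for a
    using egen_in_span_iff[of GZ GX GY a C A B] by (simp add: Fmap_def Un_ac)
  ultimately show ?thesis
    unfolding Gmap_def by blast
qed

end
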